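(* Let $f:\mathbb{R}^n\to\mathbb{R}$ be twice differentiable with $\mu I\preceq \nabla^2 f(x)\preceq L I$ for all $x$ (where $0<\mu\le L$), and strongly self-concordant with constant $M\ge 0$. Let $\kappa=L/\mu$. Run the SR1 method with correction strategy: choose $x_0\in\mathbb{R}^n$, set $G_0=L\cdot I$, $r_{-1}=0$, and for $k=0,1,2,\dots$ set $x_{k+1}=x_k-G_k^{-1}\nabla f(x_k)$, $u_k=x_{k+1}-x_k$, $r_k=\|u_k\|_{x_k}$, $\widetilde G_k=\left(1+\frac{Mr_{k-1}}{2}\right)\left(1+\frac{Mr_k}{2}\right)G_k$, $J_k=\int_0^1\nabla^2 f(x_k+tu_k)\,dt$, and $G_{k+1}=\mathrm{SR1}(J_k,\widetilde G_k,u_k)$. Set also $J_{-1}=\nabla^2 f(x_0)$, $\lambda_k=\lambda_f(x_k)$, and $\xi_k=e^{M\sum_{i=0}^{k-1}(r_{i-1}+r_i)}$ (so $\xi_0=1$). Suppose $M\lambda_0\le\frac{\ln(3/2)}{4\kappa}$. Then for all $k\ge 0$: $$J_{k-1}\preceq G_k\preceq \xi_k\kappa J_{k-1},\qquad e^{Mr_{k-1}/2}\lambda_k\le\left(1-\frac{1}{2\kappa}\right)^k\lambda_0,\qquad r_k\le\left(1-\frac{1}{2\kappa}\right)^k\lambda_0,\qquad \xi_k\le\frac32.$$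
   Context: $f$ is strongly self-concordant with constant $M\ge0$ if $\nabla^2 f(y)-\nabla^2 f(x)\preceq M\|y-x\|_z\nabla^2 f(w)$ for all $x,y,z,w\in\mathbb{R}^n$, where $\|u\|_x=\sqrt{u^\top\nabla^2 f(x)u}$. $\lambda_f(x)=\langle\nabla f(x),[\nabla^2 f(x)]^{-1}\nabla f(x)\rangle^{1/2}$. For symmetric positive definite $A,G$ and $u\neq 0$, $\mathrm{SR1}(A,G,u)=G$ if $(G-A)u=0$, and otherwise $\mathrm{SR1}(A,G,u)=G-\frac{(G-A)uu^\top(G-A)}{u^\top(G-A)u}$. *)

theory Defs
  imports "HOL-Analysis.Analysis"
begin

definition loewner_le :: "real^'n^'n \<Rightarrow> real^'n^'n \<Rightarrow> bool" where
  "loewner_le A B \<longleftrightarrow> (\<forall>v::real^'n. 0 \<le> v \<bullet> ((B - A) *v v))"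

definition outer :: "real^'n \<Rightarrow> real^'n \<Rightarrow> real^'n^'n" where
  "outer a b = (\<chi> i j. a $ i * b $ j)"

definition loc_norm :: "(real^'n \<Rightarrow> real^'n^'n) \<Rightarrow> real^'n \<Rightarrow> real^'n \<Rightarrow> real" where
  "loc_norm hess x u = sqrt (u \<bullet> (hess x *v u))"

definition newton_decr :: "(real^'n \<Rightarrow> real^'n) \<Rightarrow> (real^'n \<Rightarrow> real^'n^'n) \<Rightarrow> real^'n \<Rightarrow> real" where
  "newton_decr grad hess x = sqrt (grad x \<bullet> (matrix_inv (hess x) *v grad x))"

definition strongly_self_concordant :: "(real^'n \<Rightarrow> real^'n^'n) \<Rightarrow> real \<Rightarrow> bool" where
  "strongly_self_concordant hess M \<longleftrightarrow>
     (\<forall>x y z w. loewner_le (hess y - hess x) (((M * loc_norm hess z (y - x)) *\<^sub>R hess w)))"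

definition SR1 :: "real^'n^'n \<Rightarrow> real^'n^'n \<Rightarrow> real^'n \<Rightarrow> real^'n^'n" where
  "SR1 A G u = (if (G - A) *v u = 0 then G
     else G - (1 / (u \<bullet> ((G - A) *v u))) *\<^sub>R outer ((G - A) *v u) ((G - A) *v u))"

definition avg_hess :: "(real^'n \<Rightarrow> real^'n^'n) \<Rightarrow> real^'n \<Rightarrow> real^'n \<Rightarrow> real^'n^'n" where
  "avg_hess hess x u = integral {0..1} (\<lambda>t. hess (x + t *\<^sub>R u))"

end

theory Submission
  imports Defs
begin

text \<open>
  Everything is proved by induction on \<open>k\<close>, maintaining \<open>J\<^sub>k\<^sub>-\<^sub>1 \<preceq> G\<^sub>k \<preceq> \<xi>\<^sub>k \<kappa> J\<^sub>k\<^sub>-\<^sub>1\<close>.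
  Integrating the strong self-concordance inequality along the segment \<open>[x\<^sub>k, x\<^sub>k\<^sub>+\<^sub>1]\<close> shows that
  \<open>J\<^sub>k\<close> and the Hessians at both endpoints agree up to factors \<open>1 + M r\<^sub>k/2\<close>. The correction
  factor therefore turns the invariant into \<open>J\<^sub>k \<preceq> G\<^sub>k' \<preceq> \<xi>\<^sub>k\<^sub>+\<^sub>1 \<kappa> J\<^sub>k\<close>, a two-sided bound that the
  SR1 update preserves. Since \<open>J\<^sub>k u\<^sub>k = g\<^sub>k\<^sub>+\<^sub>1 - g\<^sub>k\<close>, we have \<open>J\<^sub>k\<inverse> g\<^sub>k\<^sub>+\<^sub>1 = (J\<^sub>k\<inverse> - G\<^sub>k\<inverse>) g\<^sub>k\<close>, and a
  relative error \<open>m\<close> of \<open>G\<^sub>k\<inverse>\<close> against \<open>J\<^sub>k\<inverse>\<close> contracts \<open>\<parallel>g\<parallel>\<^sub>J\<^sub>\<inverse>\<close> by the factor \<open>m\<close>. With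
  \<open>\<xi>\<^sub>k \<le> 3/2\<close> and \<open>M \<lambda>\<^sub>0\<close> small this yields the rate \<open>1 - 1/(2\<kappa>)\<close> for \<open>\<lambda>\<^sub>k\<close> and \<open>r\<^sub>k\<close>; summing the
  resulting geometric series in the exponent of \<open>\<xi>\<^sub>k\<^sub>+\<^sub>1\<close> keeps \<open>\<xi>\<^sub>k\<^sub>+\<^sub>1 \<le> 3/2\<close>.
\<close>

section \<open>Quadratic forms\<close>

definition quad_form :: "real^'n^'n \<Rightarrow> real^'n \<Rightarrow> real" where
  "quad_form A v = v \<bullet> (A *v v)"

definition symmetric_matrix :: "real^'n^'n \<Rightarrow> bool" where
  "symmetric_matrix A \<longleftrightarrow> transpose A = A"

definition pos_semidef :: "real^'n^'n \<Rightarrow> bool" where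
  "pos_semidef A \<longleftrightarrow> (\<forall>v. 0 \<le> quad_form A v)"

definition pos_def :: "real^'n^'n \<Rightarrow> bool" where
  "pos_def A \<longleftrightarrow> (\<forall>v. v \<noteq> 0 \<longrightarrow> 0 < quad_form A v)"

lemma loewner_le_iff_quad_form: "loewner_le A B \<longleftrightarrow> (\<forall>v. quad_form A v \<le> quad_form B v)"
  by (simp add: loewner_le_def quad_form_def matrix_vector_mult_diff_rdistrib inner_diff_right)

lemma matrix_vector_mult_uminus_right: "(A::real^'n^'n) *v (- v) = - (A *v v)"
  using matrix_vector_mult_diff_distrib[of A 0 v] by simp

lemma quad_form_scaleR [simp]: "quad_form (c *\<^sub>R A) v = c * quad_form A v"
  by (simp add: quad_form_def scaleR_matrix_vector_assoc[symmetric])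

lemma quad_form_diff [simp]: "quad_form (A - B) v = quad_form A v - quad_form B v"
  by (simp add: quad_form_def matrix_vector_mult_diff_rdistrib inner_diff_right)

lemma quad_form_scaleR_vector [simp]: "quad_form A (c *\<^sub>R v) = c\<^sup>2 * quad_form A v"
  by (simp add: quad_form_def matrix_vector_mult_scaleR power2_eq_square)

lemma quad_form_uminus_vector [simp]: "quad_form A (- v) = quad_form A v"
  using quad_form_scaleR_vector[of A "-1" v] by simp

lemma quad_form_mat_1 [simp]: "quad_form (mat 1) v = (norm v)\<^sup>2"
  by (simp add: quad_form_def power2_norm_eq_inner)

lemma outer_matrix_vector_mult: "outer a b *v v = (b \<bullet> v) *\<^sub>R a"
  by (simp add: outer_def matrix_vector_mult_def vec_eq_iff inner_vec_def sum_distrib_left algebra_simps)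

lemma quad_form_outer: "quad_form (outer w w) v = (w \<bullet> v)\<^sup>2"
  by (simp add: quad_form_def outer_matrix_vector_mult power2_eq_square inner_commute)

lemma matrix_entry_eq_inner: "(A::real^'n^'n) $ i $ j = axis i 1 \<bullet> (A *v axis j 1)"
  by (simp add: inner_axis' matrix_vector_mult_basis column_def)

lemma symmetric_matrix_iff_inner:
  "symmetric_matrix A \<longleftrightarrow> (\<forall>v w. v \<bullet> (A *v w) = w \<bullet> (A *v v))"
proof
  assume "symmetric_matrix A"
  then have "v \<bullet> (A *v w) = w \<bullet> (A *v v)" for v w
    by (metis dot_lmul_matrix inner_commute symmetric_matrix_def transpose_matrix_vector)
  then show "\<forall>v w. v \<bullet> (A *v w) = w \<bullet> (A *v v)" by blast
next
  assume "\<forall>v w. v \<bullet> (A *v w) = w \<bullet> (A *v v)"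
  then show "symmetric_matrix A"
    unfolding symmetric_matrix_def
    by (simp add: vec_eq_iff transpose_def matrix_entry_eq_inner[of A])
qed

lemma symmetric_matrixD: "symmetric_matrix A \<Longrightarrow> v \<bullet> (A *v w) = w \<bullet> (A *v v)"
  by (simp add: symmetric_matrix_iff_inner)

lemma symmetric_matrix_diff: "symmetric_matrix A \<Longrightarrow> symmetric_matrix B \<Longrightarrow> symmetric_matrix (A - B)"
  by (simp add: symmetric_matrix_iff_inner matrix_vector_mult_diff_rdistrib inner_diff_right)

lemma symmetric_matrix_scaleR: "symmetric_matrix A \<Longrightarrow> symmetric_matrix (c *\<^sub>R A)"
  by (simp add: symmetric_matrix_iff_inner scaleR_matrix_vector_assoc[symmetric])

lemma symmetric_matrix_outer: "symmetric_matrix (outer w w)"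
  by (simp add: symmetric_matrix_iff_inner outer_matrix_vector_mult inner_commute)

lemma symmetric_matrix_mat: "symmetric_matrix (mat c)"
  by (simp add: symmetric_matrix_def)

lemma quad_form_add:
  assumes "symmetric_matrix A"
  shows "quad_form A (v + w) = quad_form A v + 2 * (v \<bullet> (A *v w)) + quad_form A w"
  using symmetric_matrixD[OF assms, of v w]
  by (simp add: quad_form_def matrix_vector_right_distrib inner_add_left inner_add_right)

lemma quad_form_diff_vector:
  assumes "symmetric_matrix A"
  shows "quad_form A (v - w) = quad_form A v - 2 * (v \<bullet> (A *v w)) + quad_form A w"
  using quad_form_add[OF assms, of v "- w"]
  by (simp add: matrix_vector_mult_uminus_right)

lemma polarization_bound:
  assumes S: "symmetric_matrix D" and B: "\<And>v. \<bar>quad_form D v\<bar> \<le> C * (norm v)\<^sup>2"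
  shows "\<bar>a \<bullet> (D *v b)\<bar> \<le> C * ((norm a)\<^sup>2 + (norm b)\<^sup>2) / 2"
proof -
  have "4 * (a \<bullet> (D *v b)) = quad_form D (a + b) - quad_form D (a - b)"
    using quad_form_add[OF S, of a b] quad_form_diff_vector[OF S, of a b] by simp
  then have "\<bar>4 * (a \<bullet> (D *v b))\<bar> \<le> C * (norm (a + b))\<^sup>2 + C * (norm (a - b))\<^sup>2"
    using B[of "a + b"] B[of "a - b"] by linarith
  also have "\<dots> = 2 * C * ((norm a)\<^sup>2 + (norm b)\<^sup>2)"
    by (simp add: power2_norm_eq_inner inner_add_left inner_add_right inner_diff_left
        inner_diff_right inner_commute algebra_simps)
  finally show ?thesis by (simp add: abs_mult)
qed

lemma pos_def_imp_pos_semidef: "pos_def A \<Longrightarrow> pos_semidef A"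
  unfolding pos_def_def pos_semidef_def by (metis order_le_less quad_form_def inner_zero_left)

lemma pos_semidef_Cauchy_Schwarz:
  assumes S: "symmetric_matrix D" and P: "pos_semidef D"
  shows "(v \<bullet> (D *v w))\<^sup>2 \<le> quad_form D v * quad_form D w"
proof -
  define b where "b = v \<bullet> (D *v w)"
  have nonneg: "0 \<le> quad_form D v + 2 * t * b + t\<^sup>2 * quad_form D w" for t
    using P quad_form_add[OF S, of v "t *\<^sub>R w"]
    by (simp add: pos_semidef_def b_def matrix_vector_mult_scaleR) (metis mult.assoc)
  show ?thesis
  proof (cases "quad_form D w = 0")
    case True
    have "b = 0"
    proof (rule ccontr)
      assume "b \<noteq> 0"
      then have "quad_form D v + 2 * (- (quad_form D v + 1) / (2 * b)) * b = -1"
        by (simp add: field_simps)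
      with nonneg[of "- (quad_form D v + 1) / (2 * b)"] True show False by simp
    qed
    with True show ?thesis by (simp add: b_def)
  next
    case False
    with P have w: "0 < quad_form D w" by (metis pos_semidef_def order_le_less)
    have "quad_form D v + 2 * (- b / quad_form D w) * b + (- b / quad_form D w)\<^sup>2 * quad_form D w
        = quad_form D v - b\<^sup>2 / quad_form D w"
      using w by (simp add: field_simps power2_eq_square)
    with nonneg[of "- b / quad_form D w"] have "b\<^sup>2 / quad_form D w \<le> quad_form D v"
      by simp
    with w show ?thesis by (simp add: b_def pos_divide_le_eq mult.commute)
  qed
qed

lemma matrix_inv_right: "invertible A \<Longrightarrow> A ** matrix_inv A = mat 1"
  and matrix_inv_left: "invertible A \<Longrightarrow> matrix_inv A ** A = mat 1"
  unfolding invertible_def matrix_inv_def by (metis (mono_tags, lifting) someI_ex)+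

lemma matrix_vector_mult_inv_right: "invertible A \<Longrightarrow> A *v (matrix_inv A *v v) = v"
  and matrix_vector_mult_inv_left: "invertible A \<Longrightarrow> matrix_inv A *v (A *v v) = v"
  by (simp_all add: matrix_vector_mul_assoc matrix_inv_right matrix_inv_left)

lemma pos_def_invertible:
  fixes A :: "real^'n^'n"
  assumes "pos_def A"
  shows "invertible A"
proof -
  have "inj ((*v) A)"
  proof (rule injI)
    fix v w assume "A *v v = A *v w"
    then have "quad_form A (v - w) = 0"
      by (simp add: quad_form_def matrix_vector_mult_diff_distrib)
    with assms show "v = w" by (metis pos_def_def less_irrefl right_minus_eq)
  qed
  then obtain B where "B ** A = mat 1" using matrix_left_invertible_injective by blast
  then show ?thesis using matrix_left_right_inverse invertible_def by blast
qed

lemma symmetric_matrix_inv: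
  assumes S: "symmetric_matrix A" and I: "invertible A"
  shows "symmetric_matrix (matrix_inv A)"
  unfolding symmetric_matrix_iff_inner
proof (intro allI)
  fix v w
  let ?B = "matrix_inv A"
  have "v \<bullet> (?B *v w) = (A *v (?B *v v)) \<bullet> (?B *v w)"
    using matrix_vector_mult_inv_right[OF I] by simp
  also have "\<dots> = (A *v (?B *v w)) \<bullet> (?B *v v)"
    using symmetric_matrixD[OF S] by (simp add: inner_commute)
  also have "\<dots> = w \<bullet> (?B *v v)"
    using matrix_vector_mult_inv_right[OF I] by simp
  finally show "v \<bullet> (?B *v w) = w \<bullet> (?B *v v)" .
qed

lemma quad_form_matrix_inv:
  "invertible A \<Longrightarrow> quad_form A (matrix_inv A *v g) = quad_form (matrix_inv A) g"
  by (simp add: quad_form_def matrix_vector_mult_inv_right inner_commute)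

lemma quad_form_matrix_inv_nonneg: "pos_def A \<Longrightarrow> 0 \<le> quad_form (matrix_inv A) g"
  by (metis pos_def_imp_pos_semidef pos_def_invertible pos_semidef_def quad_form_matrix_inv)

lemma matrix_inv_antimono:
  assumes SA: "symmetric_matrix A" and PA: "pos_def A" and PB: "pos_def B"
    and le: "\<And>v. quad_form A v \<le> c * quad_form B v" and c: "0 < c"
  shows "quad_form (matrix_inv B) x \<le> c * quad_form (matrix_inv A) x"
proof -
  define y where "y = matrix_inv B *v x"
  define z where "z = matrix_inv A *v x"
  have Az: "A *v z = x" and By: "B *v y = x"
    using matrix_vector_mult_inv_right pos_def_invertible PA PB by (auto simp: y_def z_def)
  have "0 \<le> quad_form A (c *\<^sub>R z - y)"
    using pos_def_imp_pos_semidef[OF PA] by (simp add: pos_semidef_def)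
  also have "\<dots> = c\<^sup>2 * quad_form A z - 2 * c * (z \<bullet> (A *v y)) + quad_form A y"
    by (simp add: quad_form_diff_vector[OF SA])
  also have "\<dots> = c\<^sup>2 * (x \<bullet> z) - 2 * c * (x \<bullet> y) + quad_form A y"
    using symmetric_matrixD[OF SA, of z y] by (simp add: quad_form_def Az inner_commute)
  also have "quad_form A y \<le> c * (x \<bullet> y)"
    using le[of y] by (simp add: quad_form_def By inner_commute)
  finally have "0 \<le> c * (c * (x \<bullet> z) - x \<bullet> y)"
    by (simp add: algebra_simps power2_eq_square)
  with c have "x \<bullet> y \<le> c * (x \<bullet> z)"
    by (simp add: zero_le_mult_iff)
  then show ?thesis by (simp add: quad_form_def y_def z_def)
qed

lemma SR1_bounds:
  assumes SA: "symmetric_matrix A" and SG: "symmetric_matrix G"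
    and lo: "\<And>v. quad_form A v \<le> quad_form G v" and hi: "\<And>v. quad_form G v \<le> \<eta> * quad_form A v"
  shows "symmetric_matrix (SR1 A G u)"
    and "quad_form A v \<le> quad_form (SR1 A G u) v"
    and "quad_form (SR1 A G u) v \<le> \<eta> * quad_form A v"
proof (atomize (full), cases "(G - A) *v u = 0")
  case True
  then show "symmetric_matrix (SR1 A G u) \<and> quad_form A v \<le> quad_form (SR1 A G u) v
      \<and> quad_form (SR1 A G u) v \<le> \<eta> * quad_form A v"
    using SG lo hi by (simp add: SR1_def)
next
  case False
  define D where "D = G - A"
  define w where "w = D *v u"
  define s where "s = u \<bullet> w"
  have SD: "symmetric_matrix D" using SA SG symmetric_matrix_diff D_def by blast
  have PD: "pos_semidef D" using lo by (simp add: pos_semidef_def D_def)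
  have s_eq: "s = quad_form D u" by (simp add: s_def w_def quad_form_def)
  \<comment> \<open>by Cauchy-Schwarz, \<open>u\<^sup>T D u = 0\<close> would force \<open>D u = 0\<close>\<close>
  have "0 < s"
  proof (rule ccontr)
    assume "\<not> 0 < s"
    with PD s_eq have "quad_form D u = 0" by (metis pos_semidef_def order_antisym not_less)
    with pos_semidef_Cauchy_Schwarz[OF SD PD, of w u] have "(w \<bullet> w)\<^sup>2 \<le> 0"
      by (simp add: w_def)
    then have "w \<bullet> w = 0" by simp
    with False show False by (simp add: w_def D_def)
  qed
  have SR: "SR1 A G u = G - (1 / s) *\<^sub>R outer w w"
    using False by (simp add: SR1_def D_def w_def s_def)
  have "(w \<bullet> v)\<^sup>2 \<le> quad_form D v * s"
    using pos_semidef_Cauchy_Schwarz[OF SD PD, of v u] s_eq by (simp add: w_def inner_commute)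
  with \<open>0 < s\<close> have "(w \<bullet> v)\<^sup>2 / s \<le> quad_form D v" by (simp add: divide_le_eq)
  moreover have "0 \<le> (w \<bullet> v)\<^sup>2 / s" using \<open>0 < s\<close> by simp
  moreover have "symmetric_matrix (SR1 A G u)"
    unfolding SR by (intro symmetric_matrix_diff SG symmetric_matrix_scaleR symmetric_matrix_outer)
  ultimately show "symmetric_matrix (SR1 A G u) \<and> quad_form A v \<le> quad_form (SR1 A G u) v
      \<and> quad_form (SR1 A G u) v \<le> \<eta> * quad_form A v"
    using hi[of v] by (simp add: SR quad_form_outer D_def)
qed

lemma quad_form_sandwich_le:
  assumes SE: "symmetric_matrix E" and PE: "pos_semidef E" and PJ: "pos_def J"
    and le: "\<And>h. quad_form E h \<le> c * quad_form (matrix_inv J) h" and c: "0 \<le> c"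
  shows "quad_form J (E *v g) \<le> c * quad_form E g"
proof -
  define X where "X = quad_form J (E *v g)"
  define h where "h = J *v (E *v g)"
  have X: "0 \<le> X" using PJ pos_def_imp_pos_semidef pos_semidef_def X_def by blast
  have Eg: "0 \<le> quad_form E g" using PE pos_semidef_def by blast
  have Eh: "quad_form E h \<le> c * X"
    using le[of h] matrix_vector_mult_inv_left[OF pos_def_invertible[OF PJ]]
    by (simp add: quad_form_def h_def X_def inner_commute)
  have "g \<bullet> (E *v h) = X"
    using symmetric_matrixD[OF SE, of g h] by (simp add: h_def X_def quad_form_def inner_commute)
  then have "X\<^sup>2 \<le> quad_form E g * quad_form E h"
    using pos_semidef_Cauchy_Schwarz[OF SE PE, of g h] by simp
  also have "\<dots> \<le> quad_form E g * (c * X)"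
    using Eh Eg by (rule mult_left_mono)
  finally have "X * X \<le> (c * quad_form E g) * X"
    by (simp add: power2_eq_square mult_ac)
  then show ?thesis
    using X c Eg unfolding X_def[symmetric]
    by (cases "X = 0") (simp_all add: mult_le_cancel_right)
qed

lemma inverse_approximation_error:
  assumes SJ: "symmetric_matrix J" and PJ: "pos_def J" and SQ: "symmetric_matrix Q" and m: "0 \<le> m"
    and lo: "\<And>h. (1 - m) * quad_form (matrix_inv J) h \<le> quad_form Q h"
    and hi: "\<And>h. quad_form Q h \<le> (1 + m) * quad_form (matrix_inv J) h"
  shows "quad_form J ((matrix_inv J - Q) *v g) \<le> m\<^sup>2 * quad_form (matrix_inv J) g"
proof -
  define P where "P = matrix_inv J"
  define E where "E = Q - (1 - m) *\<^sub>R P"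
  have IJ: "invertible J" using PJ by (rule pos_def_invertible)
  have SE: "symmetric_matrix E"
    unfolding E_def P_def
    by (intro symmetric_matrix_diff SQ symmetric_matrix_scaleR symmetric_matrix_inv SJ IJ)
  have PE: "pos_semidef E" using lo by (simp add: pos_semidef_def E_def P_def)
  \<comment> \<open>\<open>(J\<inverse> - Q) g = m J\<inverse> g - E g\<close>, and \<open>\<parallel>E g\<parallel>\<^sub>J\<^sup>2 \<le> 2 m g\<^sup>T E g\<close> is absorbed by the cross term\<close>
  have E_le: "quad_form E h \<le> (2 * m) * quad_form P h" for h
    using hi[of h] unfolding E_def P_def quad_form_diff quad_form_scaleR by argo
  have "(P - Q) *v g = m *\<^sub>R (P *v g) - E *v g"
    by (simp add: E_def algebra_simps scaleR_matrix_vector_assoc[symmetric])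
  then have "quad_form J ((P - Q) *v g)
      = m\<^sup>2 * quad_form J (P *v g) - 2 * m * ((P *v g) \<bullet> (J *v (E *v g))) + quad_form J (E *v g)"
    by (simp add: quad_form_diff_vector[OF SJ] matrix_vector_mult_scaleR)
  also have "quad_form J (P *v g) = quad_form P g"
    unfolding P_def by (rule quad_form_matrix_inv[OF IJ])
  also have "(P *v g) \<bullet> (J *v (E *v g)) = quad_form E g"
    using symmetric_matrixD[OF SJ, of "P *v g" "E *v g"] matrix_vector_mult_inv_right[OF IJ]
    by (simp add: quad_form_def P_def inner_commute)
  also have "quad_form J (E *v g) \<le> (2 * m) * quad_form E g"
    using quad_form_sandwich_le[OF SE PE PJ] E_le m by (simp add: P_def)
  finally show ?thesis by (simp add: P_def)
qed

section \<open>Symmetry of the Hessian\<close>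

definition second_difference :: "(real^'n \<Rightarrow> real) \<Rightarrow> real^'n \<Rightarrow> real^'n \<Rightarrow> real^'n \<Rightarrow> real \<Rightarrow> real" where
  "second_difference f y a b h = f (y + h *\<^sub>R a + h *\<^sub>R b) - f (y + h *\<^sub>R a) - f (y + h *\<^sub>R b) + f y"

lemma second_difference_commute: "second_difference f y a b = second_difference f y b a"
  by (simp add: fun_eq_iff second_difference_def algebra_simps)

lemma second_difference_mvt:
  fixes f :: "real^'n \<Rightarrow> real"
  assumes grad: "\<And>z. (f has_derivative (\<lambda>h. grad z \<bullet> h)) (at z)" and h: "0 < h"
  obtains s where "0 < s" "s < h"
    "second_difference f y a b h = h * ((grad (y + s *\<^sub>R a + h *\<^sub>R b) - grad (y + s *\<^sub>R a)) \<bullet> a)"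
proof -
  define \<phi> where "\<phi> s = f (y + s *\<^sub>R a + h *\<^sub>R b) - f (y + s *\<^sub>R a)" for s
  define \<phi>' where "\<phi>' s ds = (grad (y + s *\<^sub>R a + h *\<^sub>R b) - grad (y + s *\<^sub>R a)) \<bullet> (ds *\<^sub>R a)" for s ds
  have "(\<phi> has_derivative \<phi>' s) (at s within {0..h})" for s
    unfolding \<phi>_def \<phi>'_def inner_diff_left
    by (intro has_derivative_diff has_derivative_compose[OF _ grad] derivative_eq_intros) auto
  then obtain s where "s \<in> {0<..<h}" and "\<phi> h - \<phi> 0 = \<phi>' s (h - 0)"
    using mvt_simple[OF h, of \<phi> \<phi>'] by blast
  then show thesis
    by (intro that[of s]) (auto simp: \<phi>_def \<phi>'_def second_difference_def)
qed

lemma second_difference_remainder: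
  fixes f :: "real^'n \<Rightarrow> real"
  assumes grad: "\<And>z. (f has_derivative (\<lambda>h. grad z \<bullet> h)) (at z)"
    and R: "\<And>z. norm (z - y) < \<delta> \<Longrightarrow> norm (grad z - grad y - H *v (z - y)) \<le> e * norm (z - y)"
    and h: "0 < h" "h * (norm a + norm b) < \<delta>" and e: "0 \<le> e"
  shows "\<bar>second_difference f y a b h - h\<^sup>2 * (a \<bullet> (H *v b))\<bar> \<le> e * h\<^sup>2 * (norm a * (2 * norm a + norm b))"
proof -
  define rem where "rem z = grad z - grad y - H *v (z - y)" for z
  obtain s where s: "0 < s" "s < h"
    and mvt: "second_difference f y a b h = h * ((grad (y + s *\<^sub>R a + h *\<^sub>R b) - grad (y + s *\<^sub>R a)) \<bullet> a)"
    using second_difference_mvt[OF grad h(1)] by blast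
  define z1 where "z1 = y + s *\<^sub>R a + h *\<^sub>R b"
  define z2 where "z2 = y + s *\<^sub>R a"
  have "norm (z1 - y) \<le> s * norm a + h * norm b"
    using norm_triangle_ineq[of "s *\<^sub>R a" "h *\<^sub>R b"] s by (simp add: z1_def)
  also have "\<dots> \<le> h * (norm a + norm b)"
    using s mult_right_mono[of s h "norm a"] by (simp add: distrib_left)
  finally have rem1: "norm (rem z1) \<le> e * (h * (norm a + norm b))"
    using R[of z1] h(2) e unfolding rem_def by (meson le_less_trans mult_left_mono order_trans)
  have "norm (z2 - y) \<le> h * norm a"
    using s by (simp add: z2_def mult_right_mono)
  moreover have "h * norm a \<le> h * (norm a + norm b)"
    using h(1) by simp
  ultimately have rem2: "norm (rem z2) \<le> e * (h * norm a)"
    using R[of z2] h(2) e unfolding rem_def by (meson le_less_trans mult_left_mono order_trans)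
  have "rem z1 - rem z2 = grad z1 - grad z2 - h *\<^sub>R (H *v b)"
    by (simp add: rem_def z1_def z2_def matrix_vector_mult_diff_distrib matrix_vector_right_distrib
        matrix_vector_mult_scaleR)
  then have "second_difference f y a b h - h\<^sup>2 * (a \<bullet> (H *v b)) = h * ((rem z1 - rem z2) \<bullet> a)"
    by (simp add: mvt z1_def z2_def inner_diff_left inner_diff_right inner_commute[of _ a]
        power2_eq_square right_diff_distrib)
  also have "\<bar>h * ((rem z1 - rem z2) \<bullet> a)\<bar> \<le> h * ((norm (rem z1) + norm (rem z2)) * norm a)"
    using h(1) Cauchy_Schwarz_ineq2[of "rem z1 - rem z2" a] norm_triangle_ineq4[of "rem z1" "rem z2"]
    by (simp add: abs_mult mult_right_mono order_trans)
  also have "\<dots> \<le> h * ((e * (h * (norm a + norm b)) + e * (h * norm a)) * norm a)"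
    using rem1 rem2 h(1) by (intro mult_left_mono mult_right_mono) auto
  also have "\<dots> = e * h\<^sup>2 * (norm a * (2 * norm a + norm b))"
    by (simp add: algebra_simps power2_eq_square)
  finally show ?thesis .
qed

lemma second_difference_tendsto:
  fixes f :: "real^'n \<Rightarrow> real"
  assumes grad: "\<And>z. (f has_derivative (\<lambda>h. grad z \<bullet> h)) (at z)"
    and hess: "(grad has_derivative (\<lambda>h. H *v h)) (at y)"
  shows "((\<lambda>h. second_difference f y a b h / h\<^sup>2) \<longlongrightarrow> a \<bullet> (H *v b)) (at_right 0)"
proof (rule tendstoI)
  fix \<epsilon> :: real assume "0 < \<epsilon>"
  define K where "K = norm a * (2 * norm a + norm b)"
  define e where "e = \<epsilon> / (K + 1)"
  have "0 \<le> K" by (simp add: K_def)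
  then have "0 < e" using \<open>0 < \<epsilon>\<close> by (simp add: e_def)
  then obtain \<delta> where "0 < \<delta>"
    and R: "\<And>z. norm (z - y) < \<delta> \<Longrightarrow> norm (grad z - grad y - H *v (z - y)) \<le> e * norm (z - y)"
    using hess unfolding has_derivative_at_alt by blast
  have N: "0 < norm a + norm b + 1" using norm_ge_zero[of a] norm_ge_zero[of b] by linarith
  define d where "d = \<delta> / (norm a + norm b + 1)"
  have "dist (second_difference f y a b h / h\<^sup>2) (a \<bullet> (H *v b)) < \<epsilon>" if h: "0 < h" "h < d" for h
  proof -
    have "h * (norm a + norm b) \<le> h * (norm a + norm b + 1)"
      using h by simp
    also have "\<dots> < \<delta>"
      using h N by (simp add: d_def pos_less_divide_eq)
    finally have small: "h * (norm a + norm b) < \<delta>" .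
    have "dist (second_difference f y a b h / h\<^sup>2) (a \<bullet> (H *v b))
        = \<bar>second_difference f y a b h - h\<^sup>2 * (a \<bullet> (H *v b))\<bar> / h\<^sup>2"
      using h by (simp add: dist_real_def field_simps)
    also have "\<dots> \<le> e * K"
      using second_difference_remainder[OF grad R h(1) small] \<open>0 < e\<close> h
      by (simp add: K_def divide_le_eq mult_ac)
    also have "\<dots> < \<epsilon>"
      using \<open>0 < \<epsilon>\<close> \<open>0 \<le> K\<close> by (simp add: e_def field_simps)
    finally show ?thesis .
  qed
  moreover have "0 < d" using \<open>0 < \<delta>\<close> N by (simp add: d_def)
  ultimately show "\<forall>\<^sub>F h in at_right 0. dist (second_difference f y a b h / h\<^sup>2) (a \<bullet> (H *v b)) < \<epsilon>"
    by (auto simp: eventually_at_right_field)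
qed

lemma hessian_symmetric:
  fixes f :: "real^'n \<Rightarrow> real"
  assumes grad: "\<And>z. (f has_derivative (\<lambda>h. grad z \<bullet> h)) (at z)"
    and hess: "(grad has_derivative (\<lambda>h. H *v h)) (at y)"
  shows "symmetric_matrix H"
  unfolding symmetric_matrix_iff_inner
proof (intro allI)
  fix a b
  show "a \<bullet> (H *v b) = b \<bullet> (H *v a)"
    using second_difference_tendsto[OF grad hess, of a b] second_difference_tendsto[OF grad hess, of b a]
    by (simp add: second_difference_commute tendsto_unique[OF trivial_limit_at_right_real])
qed

section \<open>Averages over the unit interval\<close>

lemma has_integral_affine_01: "((\<lambda>t::real. \<alpha> + \<beta> * t) has_integral (\<alpha> + \<beta> / 2)) {0..1}"
proof -
  have "((\<lambda>t. \<alpha> + \<beta> * t) has_integral ((\<alpha> * 1 + \<beta> * 1\<^sup>2 / 2) - (\<alpha> * 0 + \<beta> * 0\<^sup>2 / 2))) {0..1}"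
    by (intro fundamental_theorem_of_calculus)
       (auto simp flip: has_real_derivative_iff_has_vector_derivative intro!: derivative_eq_intros)
  then show ?thesis by simp
qed

lemma integral_01_le_affine:
  fixes \<phi> :: "real \<Rightarrow> real"
  assumes "\<phi> integrable_on {0..1}" and "\<And>t. t \<in> {0..1} \<Longrightarrow> \<phi> t \<le> \<alpha> + \<beta> * t"
  shows "integral {0..1} \<phi> \<le> \<alpha> + \<beta> / 2"
  using has_integral_le[OF integrable_integral[OF assms(1)] has_integral_affine_01] assms(2) by blast

lemma integral_01_ge_affine:
  fixes \<phi> :: "real \<Rightarrow> real"
  assumes "\<phi> integrable_on {0..1}" and "\<And>t. t \<in> {0..1} \<Longrightarrow> \<alpha> + \<beta> * t \<le> \<phi> t"
  shows "\<alpha> + \<beta> / 2 \<le> integral {0..1} \<phi>"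
  using has_integral_le[OF has_integral_affine_01 integrable_integral[OF assms(1)]] assms(2) by blast

lemma has_integral_reflect_01:
  fixes \<phi> :: "real \<Rightarrow> 'a::banach"
  assumes "(\<phi> has_integral i) {0..1}"
  shows "((\<lambda>t. \<phi> (1 - t)) has_integral i) {0..1}"
proof -
  have "((\<lambda>t. \<phi> ((-1) *\<^sub>R t + 1)) has_integral (1 / \<bar>-1\<bar> ^ DIM(real)) *\<^sub>R i)
          ((\<lambda>t. (1 / -1) *\<^sub>R t + - ((1 / -1) *\<^sub>R 1)) ` cbox 0 1)"
    using assms by (intro has_integral_affinity) auto
  moreover have "(\<lambda>t::real. (1 / -1) *\<^sub>R t + - ((1 / -1) *\<^sub>R 1)) ` cbox 0 1 = {0..1}"
    by (auto simp: image_iff intro!: bexI[where x="1 - _"])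
  ultimately show ?thesis by simp
qed

lemma integral_01_bounds_at_0:
  fixes \<phi> :: "real \<Rightarrow> real"
  assumes int: "\<phi> integrable_on {0..1}"
    and slope: "\<And>s t w. s \<in> {0..1} \<Longrightarrow> t \<in> {0..1} \<Longrightarrow> w \<in> {0..1} \<Longrightarrow> \<phi> t - \<phi> s \<le> c * \<bar>t - s\<bar> * \<phi> w"
  shows "integral {0..1} \<phi> \<le> (1 + c / 2) * \<phi> 0"
    and "\<phi> 0 \<le> (1 + c / 2) * integral {0..1} \<phi>"
proof -
  have "integral {0..1} \<phi> \<le> \<phi> 0 + c * \<phi> 0 / 2"
    using slope[of 0 _ 0] by (intro integral_01_le_affine[OF int]) (auto simp: algebra_simps)
  then show "integral {0..1} \<phi> \<le> (1 + c / 2) * \<phi> 0" by (simp add: algebra_simps)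
  have "\<phi> 0 - \<phi> t \<le> c * t * integral {0..1} \<phi>" if t: "t \<in> {0..1}" for t
  proof -
    have "\<phi> 0 - \<phi> t + 0 / 2 \<le> integral {0..1} (\<lambda>w. c * t * \<phi> w)"
      using slope[of t 0] t
      by (intro integral_01_ge_affine integrable_on_cmult_left[OF int, of "c * t", simplified]) auto
    then show ?thesis by simp
  qed
  then have "\<phi> 0 + (- c * integral {0..1} \<phi>) / 2 \<le> integral {0..1} \<phi>"
    by (intro integral_01_ge_affine[OF int]) (auto simp: algebra_simps)
  then show "\<phi> 0 \<le> (1 + c / 2) * integral {0..1} \<phi>" by (simp add: algebra_simps)
qed

lemma integral_01_bounds_at_1:
  fixes \<phi> :: "real \<Rightarrow> real"
  assumes int: "\<phi> integrable_on {0..1}"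
    and slope: "\<And>s t w. s \<in> {0..1} \<Longrightarrow> t \<in> {0..1} \<Longrightarrow> w \<in> {0..1} \<Longrightarrow> \<phi> t - \<phi> s \<le> c * \<bar>t - s\<bar> * \<phi> w"
  shows "integral {0..1} \<phi> \<le> (1 + c / 2) * \<phi> 1"
    and "\<phi> 1 \<le> (1 + c / 2) * integral {0..1} \<phi>"
proof -
  define \<psi> where "\<psi> = (\<lambda>t. \<phi> (1 - t))"
  have refl: "(\<psi> has_integral integral {0..1} \<phi>) {0..1}"
    unfolding \<psi>_def using has_integral_reflect_01 int by blast
  have "\<psi> t - \<psi> s \<le> c * \<bar>t - s\<bar> * \<psi> w" if "s \<in> {0..1}" "t \<in> {0..1}" "w \<in> {0..1}" for s t w
    using slope[of "1 - s" "1 - t" "1 - w"] that by (simp add: \<psi>_def abs_minus_commute)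
  from integral_01_bounds_at_0[OF has_integral_integrable[OF refl] this]
  show "integral {0..1} \<phi> \<le> (1 + c / 2) * \<phi> 1" and "\<phi> 1 \<le> (1 + c / 2) * integral {0..1} \<phi>"
    using integral_unique[OF refl] by (simp_all add: \<psi>_def)
qed

section \<open>The averaged Hessian of a strongly self-concordant function\<close>

locale ssc_function =
  fixes f :: "real^'n \<Rightarrow> real" and grad :: "real^'n \<Rightarrow> real^'n" and hess :: "real^'n \<Rightarrow> real^'n^'n"
    and \<mu> L M :: real
  assumes grad: "\<And>y. (f has_derivative (\<lambda>h. grad y \<bullet> h)) (at y)"
    and hess: "\<And>y. (grad has_derivative (\<lambda>h. hess y *v h)) (at y)"
    and mu_pos: "0 < \<mu>" and mu_le_L: "\<mu> \<le> L"
    and bounds: "\<And>y. loewner_le (\<mu> *\<^sub>R mat 1) (hess y) \<and> loewner_le (hess y) (L *\<^sub>R mat 1)"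
    and M_nonneg: "0 \<le> M"
    and ssc: "strongly_self_concordant hess M"
begin

lemma symmetric_hess: "symmetric_matrix (hess y)"
  using hessian_symmetric[OF grad hess] .

lemma quad_form_hess_ge: "\<mu> * (norm v)\<^sup>2 \<le> quad_form (hess y) v"
  and quad_form_hess_le: "quad_form (hess y) v \<le> L * (norm v)\<^sup>2"
  using bounds[of y] by (simp_all add: loewner_le_iff_quad_form)

lemma quad_form_hess_nonneg: "0 \<le> quad_form (hess y) v"
  using quad_form_hess_ge[of v y] mu_pos by (smt (verit) mult_nonneg_nonneg zero_le_power2)

lemma pos_def_of_quad_form_ge:
  assumes "\<And>v. \<mu> * (norm v)\<^sup>2 \<le> quad_form A v"
  shows "pos_def A"
  unfolding pos_def_def using assms mu_pos by (smt (verit) mult_pos_pos zero_less_norm_iff zero_less_power)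

lemma pos_def_hess: "pos_def (hess y)"
  using quad_form_hess_ge by (rule pos_def_of_quad_form_ge)

lemma quad_form_hess_diff_le:
  "quad_form (hess y) v - quad_form (hess x) v \<le> M * loc_norm hess z (y - x) * quad_form (hess w) v"
  using ssc unfolding strongly_self_concordant_def loewner_le_iff_quad_form by (metis quad_form_diff quad_form_scaleR)

lemma loc_norm_eq: "loc_norm hess z d = sqrt (quad_form (hess z) d)"
  by (simp add: loc_norm_def quad_form_def)

lemma loc_norm_nonneg: "0 \<le> loc_norm hess z d"
  by (simp add: loc_norm_eq quad_form_hess_nonneg)

lemma loc_norm_scaleR: "loc_norm hess z (t *\<^sub>R d) = \<bar>t\<bar> * loc_norm hess z d"
  by (simp add: loc_norm_eq real_sqrt_mult)

lemma loc_norm_le: "loc_norm hess z d \<le> sqrt L * norm d"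
  using real_sqrt_le_mono[OF quad_form_hess_le[of z d]] by (simp add: loc_norm_eq real_sqrt_mult)

lemma hess_entry_lipschitz: "dist (hess y $ i $ j) (hess x $ i $ j) \<le> (M * sqrt L * L) * dist y x"
proof -
  have diff_le: "quad_form (hess a) v - quad_form (hess b) v \<le> (M * sqrt L * L) * norm (a - b) * (norm v)\<^sup>2"
    for a b v
  proof -
    have "quad_form (hess a) v - quad_form (hess b) v \<le> M * loc_norm hess a (a - b) * quad_form (hess a) v"
      by (rule quad_form_hess_diff_le)
    also have "\<dots> \<le> M * (sqrt L * norm (a - b)) * (L * (norm v)\<^sup>2)"
      using M_nonneg mu_pos mu_le_L loc_norm_nonneg loc_norm_le quad_form_hess_le quad_form_hess_nonneg
      by (intro mult_mono) auto
    finally show ?thesis by (simp add: mult_ac)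
  qed
  have "\<bar>quad_form (hess y - hess x) v\<bar> \<le> ((M * sqrt L * L) * norm (y - x)) * (norm v)\<^sup>2" for v
    using diff_le[where a=y and b=x] diff_le[where a=x and b=y] by (simp add: norm_minus_commute abs_le_iff)
  from polarization_bound[OF symmetric_matrix_diff[OF symmetric_hess symmetric_hess] this,
      of "axis i 1" "axis j 1"]
  have "\<bar>axis i 1 \<bullet> ((hess y - hess x) *v axis j 1)\<bar> \<le> (M * sqrt L * L) * norm (y - x)"
    by simp
  then show ?thesis
    by (simp add: matrix_entry_eq_inner[of "hess y"] matrix_entry_eq_inner[of "hess x"] dist_norm
        matrix_vector_mult_diff_rdistrib inner_diff_right)
qed

lemma continuous_on_hess: "continuous_on S hess"
proof -
  have "0 \<le> M * sqrt L * L" using M_nonneg mu_pos mu_le_L by simp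
  then have "continuous_on S (\<lambda>y. hess y $ i $ j)" for i j
    by (auto intro!: lipschitz_on_continuous_on lipschitz_onI hess_entry_lipschitz)
  then have "continuous_on S (\<lambda>y. \<chi> i j. hess y $ i $ j)"
    by (intro continuous_on_vec_lambda)
  then show ?thesis by simp
qed

lemma integrable_hess_segment: "(\<lambda>t. hess (x + t *\<^sub>R u)) integrable_on {0..1}"
  by (intro integrable_continuous_real continuous_on_compose2[OF continuous_on_hess] continuous_intros) auto

lemma inner_avg_hess:
  "a \<bullet> (avg_hess hess x u *v b) = integral {0..1} (\<lambda>t. a \<bullet> (hess (x + t *\<^sub>R u) *v b))"
  and integrable_inner_hess_segment:
  "(\<lambda>t. a \<bullet> (hess (x + t *\<^sub>R u) *v b)) integrable_on {0..1}"
proof -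
  have "bounded_linear (\<lambda>A::real^'n^'n. a \<bullet> (A *v b))"
    by (intro bounded_linear_compose[OF bounded_linear_inner_right] linearI bounded_linearI')
       (simp_all add: matrix_vector_mult_add_rdistrib scaleR_matrix_vector_assoc[symmetric])
  from integral_linear[OF integrable_hess_segment this] integrable_linear[OF integrable_hess_segment this]
  show "a \<bullet> (avg_hess hess x u *v b) = integral {0..1} (\<lambda>t. a \<bullet> (hess (x + t *\<^sub>R u) *v b))"
    and "(\<lambda>t. a \<bullet> (hess (x + t *\<^sub>R u) *v b)) integrable_on {0..1}"
    by (simp_all add: avg_hess_def comp_def)
qed

lemma quad_form_avg_hess:
  "quad_form (avg_hess hess x u) v = integral {0..1} (\<lambda>t. quad_form (hess (x + t *\<^sub>R u)) v)"
  by (simp add: quad_form_def inner_avg_hess)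

lemma symmetric_avg_hess: "symmetric_matrix (avg_hess hess x u)"
  unfolding symmetric_matrix_iff_inner inner_avg_hess using symmetric_matrixD[OF symmetric_hess] by simp

lemma avg_hess_mult_step: "avg_hess hess x u *v u = grad (x + u) - grad x"
proof -
  have lin: "bounded_linear (\<lambda>A::real^'n^'n. A *v u)"
    by (intro bounded_linearI' linearI)
       (simp_all add: matrix_vector_mult_add_rdistrib scaleR_matrix_vector_assoc[symmetric])
  have "avg_hess hess x u *v u = integral {0..1} (\<lambda>t. hess (x + t *\<^sub>R u) *v u)"
    unfolding avg_hess_def using integral_linear[OF integrable_hess_segment lin] by (simp add: comp_def)
  also have "\<dots> = grad (x + 1 *\<^sub>R u) - grad (x + 0 *\<^sub>R u)"
  proof (intro integral_unique fundamental_theorem_of_calculus)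
    fix t :: real
    have "((\<lambda>t. grad (x + t *\<^sub>R u)) has_derivative (\<lambda>dt. hess (x + t *\<^sub>R u) *v (dt *\<^sub>R u))) (at t within {0..1})"
      by (intro has_derivative_compose[OF _ hess] derivative_eq_intros) auto
    then show "((\<lambda>t. grad (x + t *\<^sub>R u)) has_vector_derivative hess (x + t *\<^sub>R u) *v u) (at t within {0..1})"
      by (simp add: has_vector_derivative_def matrix_vector_mult_scaleR)
  qed simp
  finally show ?thesis by simp
qed

lemma quad_form_avg_hess_ge: "\<mu> * (norm v)\<^sup>2 \<le> quad_form (avg_hess hess x u) v"
proof -
  have "\<mu> * (norm v)\<^sup>2 + 0 / 2 \<le> integral {0..1} (\<lambda>t. quad_form (hess (x + t *\<^sub>R u)) v)"
    using integrable_inner_hess_segment[of v x u v] quad_form_hess_ge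
    by (intro integral_01_ge_affine) (auto simp: quad_form_def)
  then show ?thesis by (simp add: quad_form_avg_hess)
qed

lemma pos_def_avg_hess: "pos_def (avg_hess hess x u)"
  using quad_form_avg_hess_ge by (rule pos_def_of_quad_form_ge)

lemma avg_hess_bounds:
  fixes x u :: "real^'n"
  defines "\<rho> \<equiv> 1 + M * loc_norm hess x u / 2"
  shows "quad_form (avg_hess hess x u) v \<le> \<rho> * quad_form (hess x) v"
    and "quad_form (hess x) v \<le> \<rho> * quad_form (avg_hess hess x u) v"
    and "quad_form (avg_hess hess x u) v \<le> \<rho> * quad_form (hess (x + u)) v"
    and "quad_form (hess (x + u)) v \<le> \<rho> * quad_form (avg_hess hess x u) v"
proof -
  define \<phi> where "\<phi> = (\<lambda>t. quad_form (hess (x + t *\<^sub>R u)) v)"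
  have int: "\<phi> integrable_on {0..1}"
    unfolding \<phi>_def quad_form_def by (rule integrable_inner_hess_segment)
  have "\<phi> t - \<phi> s \<le> (M * loc_norm hess x u) * \<bar>t - s\<bar> * \<phi> w" for s t w
  proof -
    have "\<phi> t - \<phi> s \<le> M * loc_norm hess x ((x + t *\<^sub>R u) - (x + s *\<^sub>R u)) * \<phi> w"
      unfolding \<phi>_def by (rule quad_form_hess_diff_le)
    also have "(x + t *\<^sub>R u) - (x + s *\<^sub>R u) = (t - s) *\<^sub>R u" by (simp add: algebra_simps)
    finally show ?thesis by (simp add: loc_norm_scaleR mult_ac)
  qed
  note at_0 = integral_01_bounds_at_0[OF int this] and at_1 = integral_01_bounds_at_1[OF int this]
  have "quad_form (avg_hess hess x u) v = integral {0..1} \<phi>" "\<phi> 0 = quad_form (hess x) v"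
    "\<phi> 1 = quad_form (hess (x + u)) v"
    by (simp_all add: \<phi>_def quad_form_avg_hess)
  with at_0 at_1 show "quad_form (avg_hess hess x u) v \<le> \<rho> * quad_form (hess x) v"
    and "quad_form (hess x) v \<le> \<rho> * quad_form (avg_hess hess x u) v"
    and "quad_form (avg_hess hess x u) v \<le> \<rho> * quad_form (hess (x + u)) v"
    and "quad_form (hess (x + u)) v \<le> \<rho> * quad_form (avg_hess hess x u) v"
    by (simp_all add: \<rho>_def mult_ac)
qed

end

section \<open>The corrected SR1 method\<close>

lemma exp_mult_one_plus_le:
  fixes b :: real
  assumes "0 \<le> b" "2 * b < 1"
  shows "exp b * (1 + b) \<le> 1 / (1 - 2 * b)"
proof -
  have "exp b * (1 + b) \<le> exp b * exp b"
    using assms by (intro mult_left_mono exp_ge_add_one_self) auto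
  also have "\<dots> = 1 / exp (- (2 * b))" by (simp add: exp_minus exp_add[symmetric] field_simps)
  also have "\<dots> \<le> 1 / (1 - 2 * b)"
    using assms exp_ge_add_one_self[of "- (2 * b)"] by (intro divide_left_mono) auto
  finally show ?thesis .
qed

text \<open>In the application \<open>t = 1/\<kappa>\<close>, \<open>a\<close> and \<open>b\<close> are \<open>M r\<^sub>k\<^sub>-\<^sub>1/2\<close> and \<open>M r\<^sub>k/2\<close>, and \<open>C\<close> is the
  factor in \<open>G\<^sub>k \<preceq> C J\<^sub>k\<close>.\<close>

lemma contraction_factor_le:
  fixes t a b C :: real
  assumes t: "0 < t" "t \<le> 1" and a: "0 \<le> a" "a \<le> t / 16" and b: "0 \<le> b" "b \<le> t / 16"
    and C: "0 < C" "C \<le> 3 / (2 * t)"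
  shows "exp b * (1 + b) * max (1 - 1 / C) ((1 + a) * (1 + b) - 1) \<le> 1 - t / 2"
proof -
  have E: "exp b * (1 + b) \<le> 8 / (8 - t)"
  proof -
    have "exp b * (1 + b) \<le> 1 / (1 - 2 * b)" using b t by (intro exp_mult_one_plus_le) auto
    also have "\<dots> \<le> 8 / (8 - t)" using b t by (simp add: field_simps)
    finally show ?thesis .
  qed
  have "8 / (8 - t) * (1 - 1 / C) \<le> 8 / (8 - t) * (1 - 2 * t / 3)"
    using C t by (intro mult_left_mono) (auto simp: field_simps)
  also have "\<dots> \<le> 1 - t / 2" using t by (simp add: field_simps)
  finally have m1: "8 / (8 - t) * (1 - 1 / C) \<le> 1 - t / 2" .
  have "a * b \<le> (t / 16) * (t / 16)" using a b by (intro mult_mono) auto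
  moreover have "(1 + a) * (1 + b) - 1 = a + b + a * b" by (simp add: algebra_simps)
  ultimately have "(1 + a) * (1 + b) - 1 \<le> t / 16 + t / 16 + (t / 16) * (t / 16)"
    using a b by linarith
  also have "\<dots> \<le> t / 7" using t by (simp add: field_simps)
  finally have "8 / (8 - t) * ((1 + a) * (1 + b) - 1) \<le> 8 / (8 - t) * (t / 7)"
    using t by (intro mult_left_mono) auto
  also have "\<dots> \<le> 1 - t / 2" using t by (simp add: field_simps) (smt (verit) mult_nonneg_nonneg)
  finally have m2: "8 / (8 - t) * ((1 + a) * (1 + b) - 1) \<le> 1 - t / 2" .
  have "0 \<le> (1 + a) * (1 + b) - 1" using a b by (simp add: algebra_simps)
  then have "0 \<le> max (1 - 1 / C) ((1 + a) * (1 + b) - 1)" by (rule max.coboundedI2)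
  then have "exp b * (1 + b) * max (1 - 1 / C) ((1 + a) * (1 + b) - 1)
      \<le> 8 / (8 - t) * max (1 - 1 / C) ((1 + a) * (1 + b) - 1)"
    using E by (intro mult_right_mono)
  also have "\<dots> \<le> 1 - t / 2" using m1 m2 by (simp add: max_def)
  finally show ?thesis .
qed

locale corrected_sr1 = ssc_function f grad hess \<mu> L M
  for f :: "real^'n \<Rightarrow> real" and grad hess \<mu> L M +
  fixes x :: "nat \<Rightarrow> real^'n" and G :: "nat \<Rightarrow> real^'n^'n"
  assumes G0: "G 0 = L *\<^sub>R mat 1"
    and x_step: "\<And>k. x (Suc k) = x k - matrix_inv (G k) *v grad (x k)"
    and G_step: "\<And>k. G (Suc k) =
       SR1 (avg_hess hess (x k) (x (Suc k) - x k))
           (((1 + M * (if k = 0 then 0 else loc_norm hess (x (k - 1)) (x k - x (k - 1))) / 2)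
             * (1 + M * loc_norm hess (x k) (x (Suc k) - x k) / 2)) *\<^sub>R G k)
           (x (Suc k) - x k)"
    and init: "M * newton_decr grad hess (x 0) \<le> ln (3/2) / (4 * (L / \<mu>))"
begin

definition \<kappa> :: real where
  "\<kappa> = L / \<mu>"

definition q :: real where
  "q = 1 - 1 / (2 * \<kappa>)"

definition g :: "nat \<Rightarrow> real^'n" where
  "g k = grad (x k)"

definition lam :: "nat \<Rightarrow> real" where
  "lam k = newton_decr grad hess (x k)"

definition r :: "nat \<Rightarrow> real" where
  "r k = loc_norm hess (x k) (x (Suc k) - x k)"

definition r_prev :: "nat \<Rightarrow> real" where
  "r_prev k = (if k = 0 then 0 else r (k - 1))"

definition J :: "nat \<Rightarrow> real^'n^'n" where
  "J k = avg_hess hess (x k) (x (Suc k) - x k)"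

definition J_prev :: "nat \<Rightarrow> real^'n^'n" where
  "J_prev k = (if k = 0 then hess (x 0) else avg_hess hess (x (k - 1)) (x k - x (k - 1)))"

definition corr :: "nat \<Rightarrow> real" where
  "corr k = (1 + M * r_prev k / 2) * (1 + M * r k / 2)"

definition \<xi> :: "nat \<Rightarrow> real" where
  "\<xi> k = exp (M * (\<Sum>i<k. r_prev i + r i))"

lemma kappa_ge_1: "1 \<le> \<kappa>"
  using mu_pos mu_le_L by (simp add: \<kappa>_def)

lemma q_nonneg: "0 \<le> q" and q_less_1: "q < 1"
  using kappa_ge_1 by (auto simp: q_def field_simps)

lemma r_nonneg: "0 \<le> r k"
  by (simp add: r_def loc_norm_nonneg)

lemma r_prev_nonneg: "0 \<le> r_prev k"
  by (simp add: r_prev_def r_nonneg)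

lemma r_prev_Suc: "r_prev (Suc k) = r k"
  by (simp add: r_prev_def)

lemma J_prev_Suc: "J_prev (Suc k) = J k"
  by (simp add: J_prev_def J_def)

lemma hess_le_J_prev: "quad_form (hess (x k)) v \<le> (1 + M * r_prev k / 2) * quad_form (J_prev k) v"
  and J_prev_le_hess: "quad_form (J_prev k) v \<le> (1 + M * r_prev k / 2) * quad_form (hess (x k)) v"
  using avg_hess_bounds(3,4)[of "x (k - 1)" "x k - x (k - 1)" v]
  by (cases k; simp add: J_prev_def r_prev_def r_def)+

lemma J_le_hess: "quad_form (J k) v \<le> (1 + M * r k / 2) * quad_form (hess (x k)) v"
  and hess_le_J: "quad_form (hess (x k)) v \<le> (1 + M * r k / 2) * quad_form (J k) v"
  unfolding J_def r_def by (rule avg_hess_bounds(1), rule avg_hess_bounds(2))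

lemma symmetric_J: "symmetric_matrix (J k)" and pos_def_J: "pos_def (J k)"
  unfolding J_def by (rule symmetric_avg_hess, rule pos_def_avg_hess)

lemma symmetric_J_prev: "symmetric_matrix (J_prev k)" and pos_def_J_prev: "pos_def (J_prev k)"
  unfolding J_prev_def
  by (simp_all add: symmetric_hess symmetric_avg_hess pos_def_hess pos_def_avg_hess)

lemma step_eq: "x (Suc k) - x k = - (matrix_inv (G k) *v g k)"
  using x_step[of k] by (simp add: g_def)

lemma g_Suc: "g (Suc k) = g k - J k *v (matrix_inv (G k) *v g k)"
proof -
  have "J k *v (x (Suc k) - x k) = g (Suc k) - g k"
    unfolding J_def g_def using avg_hess_mult_step[of "x k" "x (Suc k) - x k"] by simp
  then have "- (J k *v (matrix_inv (G k) *v g k)) = g (Suc k) - g k"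
    unfolding step_eq by (simp add: matrix_vector_mult_uminus_right)
  then show ?thesis by (simp add: algebra_simps)
qed

lemma lam_sq: "(lam k)\<^sup>2 = quad_form (matrix_inv (hess (x k))) (g k)"
  and lam_nonneg: "0 \<le> lam k"
proof -
  have "0 \<le> quad_form (matrix_inv (hess (x k))) (g k)"
    by (rule quad_form_matrix_inv_nonneg[OF pos_def_hess])
  then show "(lam k)\<^sup>2 = quad_form (matrix_inv (hess (x k))) (g k)" and "0 \<le> lam k"
    by (simp_all add: lam_def newton_decr_def quad_form_def g_def)
qed

lemma r_sq: "(r k)\<^sup>2 = quad_form (hess (x k)) (x (Suc k) - x k)"
  by (simp add: r_def loc_norm_eq quad_form_hess_nonneg)

lemma M_lam0_le: "M * lam 0 \<le> 1 / (8 * \<kappa>)"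
proof -
  have "3/2 \<le> exp (1/2::real)"
    using exp_ge_add_one_self[of "1/2::real"] by simp
  then have "ln (3/2::real) \<le> 1/2"
    using ln_mono[of "3/2" "exp (1/2)"] by simp
  then have "ln (3/2) / (4 * \<kappa>) \<le> (1/2) / (4 * \<kappa>)"
    using kappa_ge_1 by (intro divide_right_mono) auto
  then show ?thesis using init by (simp add: lam_def \<kappa>_def)
qed

lemma corr_ge_1: "1 \<le> corr k"
  using M_nonneg r_prev_nonneg[of k] r_nonneg[of k] by (simp add: corr_def algebra_simps)

lemma xi_pos: "0 < \<xi> k"
  by (simp add: \<xi>_def)

lemma xi_mult_corr_sq_le: "\<xi> k * (corr k)\<^sup>2 \<le> \<xi> (Suc k)"
proof -
  have "corr k \<le> exp (M * r_prev k / 2) * exp (M * r k / 2)"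
    unfolding corr_def using M_nonneg r_prev_nonneg[of k] r_nonneg[of k]
    by (intro mult_mono exp_ge_add_one_self) auto
  also have "\<dots> = exp (M * (r_prev k + r k) / 2)"
    by (simp add: exp_add[symmetric] add_divide_distrib distrib_left)
  finally have "(corr k)\<^sup>2 \<le> (exp (M * (r_prev k + r k) / 2))\<^sup>2"
    using corr_ge_1[of k] by (intro power_mono) auto
  also have "\<dots> = exp (M * (r_prev k + r k))"
    by (simp flip: exp_double)
  finally have "(corr k)\<^sup>2 \<le> exp (M * (r_prev k + r k))" .
  then show ?thesis
    by (simp add: \<xi>_def exp_add distrib_left)
qed

lemma G_Suc_eq: "G (Suc k) = SR1 (J k) (corr k *\<^sub>R G k) (x (Suc k) - x k)"
  by (cases k) (simp_all add: G_step corr_def J_def r_prev_def r_def)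

lemma r_factor_nonneg: "0 \<le> 1 + M * r k / 2"
  and r_prev_factor_nonneg: "0 \<le> 1 + M * r_prev k / 2"
  using M_nonneg r_nonneg[of k] r_prev_nonneg[of k] by simp_all

definition G_bounds :: "nat \<Rightarrow> bool" where
  "G_bounds k \<longleftrightarrow> symmetric_matrix (G k) \<and> (\<forall>v. quad_form (J_prev k) v \<le> quad_form (G k) v)
     \<and> (\<forall>v. quad_form (G k) v \<le> \<xi> k * \<kappa> * quad_form (J_prev k) v)"

lemma G_boundsD:
  assumes "G_bounds k"
  shows "symmetric_matrix (G k)" and "quad_form (J_prev k) v \<le> quad_form (G k) v"
    and "quad_form (G k) v \<le> \<xi> k * \<kappa> * quad_form (J_prev k) v" and "pos_def (G k)"
proof -
  show "symmetric_matrix (G k)" and "quad_form (G k) v \<le> \<xi> k * \<kappa> * quad_form (J_prev k) v"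
    using assms by (simp_all add: G_bounds_def)
  show lo: "quad_form (J_prev k) w \<le> quad_form (G k) w" for w
    using assms by (simp add: G_bounds_def)
  show "pos_def (G k)"
    unfolding pos_def_def using pos_def_J_prev[of k] lo by (meson pos_def_def less_le_trans)
qed

lemma G_bounds_0: "G_bounds 0"
proof -
  have "quad_form (G 0) v = \<kappa> * (\<mu> * (norm v)\<^sup>2)" for v
    using mu_pos by (simp add: G0 \<kappa>_def)
  also have "\<kappa> * (\<mu> * (norm v)\<^sup>2) \<le> \<kappa> * quad_form (hess (x 0)) v" for v
    using quad_form_hess_ge kappa_ge_1 by (intro mult_left_mono) auto
  finally show ?thesis
    using quad_form_hess_le
    by (simp add: G_bounds_def G0 J_prev_def \<xi>_def symmetric_matrix_scaleR symmetric_matrix_mat)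
qed

lemma r_le_lam:
  assumes "G_bounds k"
  shows "r k \<le> exp (M * r_prev k / 2) * lam k"
proof -
  define a where "a = M * r_prev k / 2"
  have a: "0 \<le> a" using M_nonneg r_prev_nonneg[of k] by (simp add: a_def)
  have "quad_form (G k) (x (Suc k) - x k) = quad_form (matrix_inv (G k)) (g k)"
    using quad_form_matrix_inv[OF pos_def_invertible[OF G_boundsD(4)[OF assms]]] by (simp add: step_eq)
  also have "\<dots> \<le> quad_form (matrix_inv (J_prev k)) (g k)"
    using G_boundsD[OF assms] symmetric_J_prev pos_def_J_prev
    by (intro matrix_inv_antimono[where c=1, simplified]) auto
  also have "\<dots> \<le> (1 + a) * (lam k)\<^sup>2"
    unfolding lam_sq a_def
    by (intro matrix_inv_antimono symmetric_hess pos_def_hess pos_def_J_prev hess_le_J_prev)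
       (use a in \<open>simp add: a_def\<close>)
  finally have G_le: "quad_form (G k) (x (Suc k) - x k) \<le> (1 + a) * (lam k)\<^sup>2" .
  have "(r k)\<^sup>2 \<le> (1 + a) * quad_form (J_prev k) (x (Suc k) - x k)"
    unfolding r_sq a_def by (rule hess_le_J_prev)
  also have "\<dots> \<le> (1 + a) * ((1 + a) * (lam k)\<^sup>2)"
    using order_trans[OF G_boundsD(2)[OF assms] G_le] a by (intro mult_left_mono) auto
  also have "\<dots> = ((1 + a) * lam k)\<^sup>2"
    by (simp add: power2_eq_square)
  finally have "(r k)\<^sup>2 \<le> ((1 + a) * lam k)\<^sup>2" .
  then have "r k \<le> (1 + a) * lam k"
    by (rule power2_le_imp_le) (use a lam_nonneg[of k] in simp)
  also have "\<dots> \<le> exp a * lam k"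
    using lam_nonneg[of k] by (intro mult_right_mono exp_ge_add_one_self) auto
  finally show ?thesis by (simp add: a_def)
qed

lemma J_le_G:
  assumes "G_bounds k"
  shows "quad_form (J k) v \<le> corr k * quad_form (G k) v"
proof -
  have "quad_form (J k) v \<le> (1 + M * r k / 2) * quad_form (hess (x k)) v"
    by (rule J_le_hess)
  also have "\<dots> \<le> (1 + M * r k / 2) * ((1 + M * r_prev k / 2) * quad_form (J_prev k) v)"
    using hess_le_J_prev r_factor_nonneg by (rule mult_left_mono)
  also have "\<dots> \<le> (1 + M * r k / 2) * ((1 + M * r_prev k / 2) * quad_form (G k) v)"
    using G_boundsD(2)[OF assms] r_factor_nonneg r_prev_factor_nonneg by (intro mult_left_mono)
  finally show ?thesis by (simp add: corr_def mult_ac)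
qed

lemma G_le_J:
  assumes "G_bounds k"
  shows "quad_form (G k) v \<le> \<xi> k * \<kappa> * corr k * quad_form (J k) v"
proof -
  have "0 \<le> \<xi> k * \<kappa>" using xi_pos[of k] kappa_ge_1 by simp
  have "quad_form (G k) v \<le> \<xi> k * \<kappa> * quad_form (J_prev k) v"
    by (rule G_boundsD(3)[OF assms])
  also have "\<dots> \<le> \<xi> k * \<kappa> * ((1 + M * r_prev k / 2) * quad_form (hess (x k)) v)"
    using J_prev_le_hess \<open>0 \<le> \<xi> k * \<kappa>\<close> by (rule mult_left_mono)
  also have "\<dots> \<le> \<xi> k * \<kappa> * ((1 + M * r_prev k / 2) * ((1 + M * r k / 2) * quad_form (J k) v))"
    using hess_le_J r_prev_factor_nonneg \<open>0 \<le> \<xi> k * \<kappa>\<close> by (intro mult_left_mono)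
  finally show ?thesis by (simp add: corr_def mult_ac)
qed

lemma G_bounds_Suc:
  assumes "G_bounds k"
  shows "G_bounds (Suc k)"
proof -
  have lo: "quad_form (J k) v \<le> quad_form (corr k *\<^sub>R G k) v" for v
    using J_le_G[OF assms] by simp
  have hi: "quad_form (corr k *\<^sub>R G k) v \<le> \<xi> (Suc k) * \<kappa> * quad_form (J k) v" for v
  proof -
    have J: "0 \<le> quad_form (J k) v"
      using pos_def_J[of k] pos_def_imp_pos_semidef pos_semidef_def by blast
    have "quad_form (corr k *\<^sub>R G k) v \<le> corr k * (\<xi> k * \<kappa> * corr k * quad_form (J k) v)"
      using G_le_J[OF assms] corr_ge_1[of k] by (simp add: mult_left_mono)
    also have "\<dots> = (\<xi> k * (corr k)\<^sup>2) * (\<kappa> * quad_form (J k) v)"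
      by (simp add: power2_eq_square mult_ac)
    also have "\<dots> \<le> \<xi> (Suc k) * (\<kappa> * quad_form (J k) v)"
      using xi_mult_corr_sq_le[of k] J kappa_ge_1 by (intro mult_right_mono) auto
    finally show ?thesis by (simp add: mult_ac)
  qed
  have "symmetric_matrix (corr k *\<^sub>R G k)"
    using G_boundsD(1)[OF assms] by (rule symmetric_matrix_scaleR)
  from SR1_bounds[OF symmetric_J this lo hi]
  show ?thesis
    unfolding G_bounds_def G_Suc_eq J_prev_Suc by blast
qed

lemma lam_Suc_le:
  assumes SG: "symmetric_matrix (G k)" and PG: "pos_def (G k)" and m: "0 \<le> m"
    and lo: "\<And>h. (1 - m) * quad_form (matrix_inv (J k)) h \<le> quad_form (matrix_inv (G k)) h"
    and hi: "\<And>h. quad_form (matrix_inv (G k)) h \<le> (1 + m) * quad_form (matrix_inv (J k)) h"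
  shows "lam (Suc k) \<le> (1 + M * r k / 2) * m * lam k"
proof -
  define b where "b = M * r k / 2"
  have b: "0 \<le> b" using M_nonneg r_nonneg[of k] by (simp add: b_def)
  have IJ: "invertible (J k)" using pos_def_J by (rule pos_def_invertible)
  have "matrix_inv (J k) *v g (Suc k) = (matrix_inv (J k) - matrix_inv (G k)) *v g k"
    by (simp add: g_Suc matrix_vector_mult_diff_distrib matrix_vector_mult_diff_rdistrib
        matrix_vector_mult_inv_left[OF IJ])
  then have gJ: "quad_form (matrix_inv (J k)) (g (Suc k))
      = quad_form (J k) ((matrix_inv (J k) - matrix_inv (G k)) *v g k)"
    by (metis quad_form_matrix_inv[OF IJ])
  have "(lam (Suc k))\<^sup>2 \<le> (1 + b) * quad_form (matrix_inv (J k)) (g (Suc k))"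
    unfolding lam_sq
    by (intro matrix_inv_antimono symmetric_J pos_def_J pos_def_hess)
       (use J_prev_le_hess[of "Suc k"] b in \<open>simp_all add: J_prev_Suc r_prev_Suc b_def\<close>)
  also have "\<dots> \<le> (1 + b) * (m\<^sup>2 * quad_form (matrix_inv (J k)) (g k))"
    unfolding gJ using b
    by (intro mult_left_mono inverse_approximation_error symmetric_J pos_def_J
        symmetric_matrix_inv SG pos_def_invertible PG m lo hi) auto
  also have "\<dots> \<le> (1 + b) * (m\<^sup>2 * ((1 + b) * (lam k)\<^sup>2))"
    unfolding lam_sq using b
    by (intro mult_left_mono matrix_inv_antimono symmetric_hess pos_def_hess pos_def_J)
       (auto simp: b_def hess_le_J)
  also have "\<dots> = ((1 + b) * m * lam k)\<^sup>2"
    by (simp add: power2_eq_square)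
  finally show ?thesis
    unfolding b_def by (rule power2_le_imp_le) (use b m lam_nonneg[of k] in \<open>simp add: b_def\<close>)
qed

lemma matrix_inv_G_approx:
  assumes G: "G_bounds k"
  defines "m \<equiv> max (1 - 1 / (\<xi> k * \<kappa> * corr k)) (corr k - 1)"
  shows "(1 - m) * quad_form (matrix_inv (J k)) h \<le> quad_form (matrix_inv (G k)) h"
    and "quad_form (matrix_inv (G k)) h \<le> (1 + m) * quad_form (matrix_inv (J k)) h"
proof -
  define C where "C = \<xi> k * \<kappa> * corr k"
  have "0 < C" using xi_pos[of k] kappa_ge_1 corr_ge_1[of k] by (simp add: C_def)
  have PG: "pos_def (G k)" by (rule G_boundsD(4)[OF G])
  have Jh: "0 \<le> quad_form (matrix_inv (J k)) h" by (rule quad_form_matrix_inv_nonneg[OF pos_def_J])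
  have "quad_form (matrix_inv (J k)) h \<le> C * quad_form (matrix_inv (G k)) h"
    using G_le_J[OF G] \<open>0 < C\<close> unfolding C_def
    by (intro matrix_inv_antimono G_boundsD(1)[OF G] pos_def_J PG) auto
  then have "(1 / C) * quad_form (matrix_inv (J k)) h \<le> quad_form (matrix_inv (G k)) h"
    using \<open>0 < C\<close> by (simp add: field_simps)
  moreover have "(1 - m) * quad_form (matrix_inv (J k)) h \<le> (1 / C) * quad_form (matrix_inv (J k)) h"
    using Jh by (intro mult_right_mono) (auto simp: m_def C_def)
  ultimately show "(1 - m) * quad_form (matrix_inv (J k)) h \<le> quad_form (matrix_inv (G k)) h"
    by linarith
  have "quad_form (matrix_inv (G k)) h \<le> corr k * quad_form (matrix_inv (J k)) h"
    using J_le_G[OF G] corr_ge_1[of k]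
    by (intro matrix_inv_antimono symmetric_J pos_def_J PG) auto
  also have "\<dots> \<le> (1 + m) * quad_form (matrix_inv (J k)) h"
    using Jh by (intro mult_right_mono) (auto simp: m_def)
  finally show "quad_form (matrix_inv (G k)) h \<le> (1 + m) * quad_form (matrix_inv (J k)) h" .
qed

lemma lam_contraction:
  assumes G: "G_bounds k" and xi: "\<xi> (Suc k) \<le> 3/2"
    and r: "r k \<le> lam 0" and r_prev: "r_prev k \<le> lam 0"
  shows "exp (M * r k / 2) * lam (Suc k) \<le> q * (exp (M * r_prev k / 2) * lam k)"
proof -
  define a where "a = M * r_prev k / 2"
  define b where "b = M * r k / 2"
  define t where "t = 1 / \<kappa>"
  define C where "C = \<xi> k * \<kappa> * corr k"
  have t: "0 < t" "t \<le> 1" using kappa_ge_1 by (auto simp: t_def)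
  have a: "0 \<le> a" "a \<le> t / 16"
    using M_nonneg r_prev_nonneg[of k] mult_left_mono[OF r_prev M_nonneg] M_lam0_le
    by (auto simp: a_def t_def field_simps)
  have b: "0 \<le> b" "b \<le> t / 16"
    using M_nonneg r_nonneg[of k] mult_left_mono[OF r M_nonneg] M_lam0_le
    by (auto simp: b_def t_def field_simps)
  have C: "0 < C" "C \<le> 3 / (2 * t)"
  proof -
    show "0 < C" using xi_pos[of k] kappa_ge_1 corr_ge_1[of k] by (simp add: C_def)
    have "C \<le> \<xi> k * (corr k)\<^sup>2 * \<kappa>"
      using xi_pos[of k] kappa_ge_1 corr_ge_1[of k]
      by (simp add: C_def power2_eq_square mult_ac mult_right_mono)
    also have "\<dots> \<le> 3/2 * \<kappa>"
      using xi_mult_corr_sq_le[of k] xi kappa_ge_1 by (intro mult_right_mono) auto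
    finally show "C \<le> 3 / (2 * t)" by (simp add: t_def)
  qed
  have "lam (Suc k) \<le> (1 + b) * max (1 - 1 / C) (corr k - 1) * lam k"
    unfolding b_def C_def using corr_ge_1[of k]
    by (intro lam_Suc_le G_boundsD(1,4)[OF G] matrix_inv_G_approx[OF G]) auto
  then have "exp b * lam (Suc k) \<le> (exp b * (1 + b) * max (1 - 1 / C) (corr k - 1)) * lam k"
    by (simp add: mult_ac)
  also have "\<dots> \<le> (1 - t / 2) * lam k"
    using contraction_factor_le[OF t a b C] lam_nonneg[of k]
    by (intro mult_right_mono) (simp_all add: corr_def a_def b_def)
  also have "\<dots> = q * lam k"
    by (simp add: q_def t_def)
  also have "\<dots> \<le> q * (exp a * lam k)"
    using mult_right_mono[OF _ lam_nonneg[of k], of 1 "exp a"] a q_nonneg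
    by (intro mult_left_mono) auto
  finally show ?thesis by (simp add: a_def b_def)
qed

lemma xi_Suc_le:
  assumes r: "\<And>i. i \<le> k \<Longrightarrow> r i \<le> q ^ i * lam 0"
  shows "\<xi> (Suc k) \<le> 3/2"
proof -
  have "(\<Sum>i<Suc k. r_prev i) = (\<Sum>i<k. r i)"
    by (simp only: sum.lessThan_Suc_shift r_prev_Suc) (simp add: r_prev_def)
  also have "\<dots> \<le> (\<Sum>i<Suc k. r i)"
    using r_nonneg[of k] by simp
  finally have "(\<Sum>i<Suc k. r_prev i + r i) \<le> 2 * (\<Sum>i<Suc k. r i)"
    by (simp add: sum.distrib)
  also have "(\<Sum>i<Suc k. r i) \<le> (\<Sum>i<Suc k. q ^ i) * lam 0"
    unfolding sum_distrib_right using r by (intro sum_mono) auto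
  also have "(\<Sum>i<Suc k. q ^ i) \<le> 2 * \<kappa>"
  proof -
    have "(\<Sum>i<Suc k. q ^ i) = (1 - q ^ Suc k) / (1 - q)"
      using q_less_1 by (simp add: sum_gp_strict del: sum.lessThan_Suc)
    also have "\<dots> \<le> 1 / (1 - q)"
      using q_nonneg q_less_1 by (intro divide_right_mono) auto
    finally show ?thesis using kappa_ge_1 by (simp add: q_def)
  qed
  finally have "M * (\<Sum>i<Suc k. r_prev i + r i) \<le> M * (4 * \<kappa> * lam 0)"
    using lam_nonneg[of 0] M_nonneg by (simp add: mult_left_mono mult_right_mono)
  also have "\<dots> = (4 * \<kappa>) * (M * lam 0)"
    by simp
  also have "\<dots> \<le> (4 * \<kappa>) * (ln (3/2) / (4 * \<kappa>))"
    using init kappa_ge_1 by (intro mult_left_mono) (auto simp: lam_def \<kappa>_def)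
  also have "\<dots> = ln (3/2)"
    using kappa_ge_1 by simp
  finally have "exp (M * (\<Sum>i<Suc k. r_prev i + r i)) \<le> exp (ln (3/2))"
    by (simp only: exp_le_cancel_iff)
  then show ?thesis by (simp add: \<xi>_def)
qed

lemma convergence:
  "G_bounds k \<and> exp (M * r_prev k / 2) * lam k \<le> q ^ k * lam 0 \<and> r k \<le> q ^ k * lam 0 \<and> \<xi> k \<le> 3/2"
proof (induction k rule: less_induct)
  case (less k)
  show ?case
  proof (cases k)
    case 0
    with G_bounds_0 r_le_lam[OF G_bounds_0] show ?thesis
      by (simp add: r_prev_def \<xi>_def)
  next
    case (Suc j)
    have IH: "G_bounds i \<and> exp (M * r_prev i / 2) * lam i \<le> q ^ i * lam 0 \<and> r i \<le> q ^ i * lam 0"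
      if "i \<le> j" for i
      using less.IH[of i] that Suc by simp
    have q_pow: "q ^ i * lam 0 \<le> lam 0" for i
      using q_nonneg q_less_1 lam_nonneg[of 0] by (simp add: mult_left_le_one_le power_le_one)
    have xi: "\<xi> (Suc j) \<le> 3/2"
      using IH by (intro xi_Suc_le) auto
    have G: "G_bounds (Suc j)"
      using IH[of j] G_bounds_Suc by blast
    have "r_prev j \<le> lam 0"
      using IH[of "j - 1"] q_pow[of "j - 1"] lam_nonneg[of 0] by (cases j) (auto simp: r_prev_def)
    then have "exp (M * r j / 2) * lam (Suc j) \<le> q * (exp (M * r_prev j / 2) * lam j)"
      using IH[of j] q_pow[of j] by (intro lam_contraction[OF _ xi]) auto
    also have "\<dots> \<le> q * (q ^ j * lam 0)"
      using IH[of j] q_nonneg by (intro mult_left_mono) auto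
    finally have lam: "exp (M * r_prev (Suc j) / 2) * lam (Suc j) \<le> q ^ Suc j * lam 0"
      by (simp add: r_prev_Suc mult_ac)
    moreover have "r (Suc j) \<le> q ^ Suc j * lam 0"
      using r_le_lam[OF G] lam by linarith
    ultimately show ?thesis
      using G xi Suc by simp
  qed
qed

end

theorem theorem3:
  fixes f :: "real^'n \<Rightarrow> real"
    and grad :: "real^'n \<Rightarrow> real^'n"
    and hess :: "real^'n \<Rightarrow> real^'n^'n"
    and \<mu> L M :: real
    and x :: "nat \<Rightarrow> real^'n"
    and G :: "nat \<Rightarrow> real^'n^'n"
  assumes grad: "\<And>y. (f has_derivative (\<lambda>h. grad y \<bullet> h)) (at y)"
    and hess: "\<And>y. (grad has_derivative (\<lambda>h. hess y *v h)) (at y)"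
    and mu_pos: "0 < \<mu>" and mu_le_L: "\<mu> \<le> L"
    and bounds: "\<And>y. loewner_le (\<mu> *\<^sub>R mat 1) (hess y) \<and> loewner_le (hess y) (L *\<^sub>R mat 1)"
    and M_nonneg: "0 \<le> M"
    and ssc: "strongly_self_concordant hess M"
    and G0: "G 0 = L *\<^sub>R mat 1"
    and x_step: "\<And>k. x (Suc k) = x k - matrix_inv (G k) *v grad (x k)"
    and G_step: "\<And>k. G (Suc k) =
       SR1 (avg_hess hess (x k) (x (Suc k) - x k))
           (((1 + M * (if k = 0 then 0 else loc_norm hess (x (k - 1)) (x k - x (k - 1))) / 2)
             * (1 + M * loc_norm hess (x k) (x (Suc k) - x k) / 2)) *\<^sub>R G k)
           (x (Suc k) - x k)"
    and init: "M * newton_decr grad hess (x 0) \<le> ln (3/2) / (4 * (L / \<mu>))"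
  shows "\<forall>k. let \<kappa> = L / \<mu>;
             r = (\<lambda>i. loc_norm hess (x i) (x (Suc i) - x i));
             rp = (\<lambda>i. if i = 0 then 0 else r (i - 1));
             Jp = (if k = 0 then hess (x 0) else avg_hess hess (x (k - 1)) (x k - x (k - 1)));
             \<xi> = exp (M * (\<Sum>i<k. rp i + r i));
             q = 1 - 1 / (2 * \<kappa>);
             lam0 = newton_decr grad hess (x 0)
           in loewner_le Jp (G k) \<and> loewner_le (G k) ((\<xi> * \<kappa>) *\<^sub>R Jp)
              \<and> exp (M * rp k / 2) * newton_decr grad hess (x k) \<le> q ^ k * lam0
              \<and> r k \<le> q ^ k * lam0
              \<and> \<xi> \<le> 3 / 2"
proof -
  interpret corrected_sr1 f grad hess \<mu> L M x G
    by unfold_locales (fact assms)+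
  have "\<forall>k. loewner_le (J_prev k) (G k) \<and> loewner_le (G k) ((\<xi> k * \<kappa>) *\<^sub>R J_prev k)
      \<and> exp (M * r_prev k / 2) * lam k \<le> q ^ k * lam 0 \<and> r k \<le> q ^ k * lam 0 \<and> \<xi> k \<le> 3 / 2"
    using convergence unfolding G_bounds_def loewner_le_iff_quad_form quad_form_scaleR by blast
  then show ?thesis
    unfolding Let_def by (fold \<kappa>_def r_def, fold r_prev_def J_prev_def lam_def, fold \<xi>_def q_def)
qed

end
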